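(* Under the standing assumptions below, the group $(V,+)$ is characteristically simple, i.e. $V=S_1\oplus\dots\oplus S_n$ is a direct sum of pairwise isomorphic simple groups. In particular, if $V$ is abelian then $V\cong C_p^n$ is an elementary abelian $p$-group for some prime $p$, while if $V$ is non-abelian then $Z(V)=0$.
   Context: Skew left brace $(B,+,\circ)$: groups $(B,+)$, $(B,\circ)$ with $a\circ(b+c)=a\circ b-a+a\circ c$; $\lambda_a(b)=-a+a\circ b$, $\sigma_a(b)=-a+b+a$, $a*b=-a+a\circ b-b$. Ideal: normal subgroup $I$ of $(B,+)$, $\lambda_a(I)\subseteq I$ for all $a$, normal in $(B,\circ)$. $I*J$ = additive subgroup generated by $\{i*j\}$; $B^{(2)}=B*B$, $B^{(3)}=B^{(2)}*B$. Standing assumptions: $B$ is a finite skew left brace and $X\subseteq B$ with $|X|\ge3$ and $\lambda_a(X)=X$, $\sigma_a(X)=X$ for all $a\in B$; $B$ is additively generated by $X$; the ideal $V$ generated by $\{x-y:x,y\in X\}$ is the smallest non-zero ideal of $B$ (contained in every non-zero ideal); the quotient $B/V$ is a trivial skew left brace (its two operations coincide) with cyclic additive group; the group $\{\sigma_a\lambda_b|_X:a,b\in V\}$ acts transitively on $X$; and $B^{(3)}=0$. *)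

theory Defs
  imports "HOL-Algebra.Algebra"
begin

text \<open>A skew left brace is given by two HOL-Algebra groups A (the additive group (B,+),
written multiplicatively in HOL-Algebra notation) and M (the group (B,\<circ>)) on the
same carrier B.\<close>

definition skew_left_brace :: "'a monoid \<Rightarrow> 'a monoid \<Rightarrow> bool" where
  "skew_left_brace A M \<longleftrightarrow> group A \<and> group M \<and> carrier A = carrier M \<and>
     (\<forall>a\<in>carrier A. \<forall>b\<in>carrier A. \<forall>c\<in>carrier A.
        a \<otimes>\<^bsub>M\<^esub> (b \<otimes>\<^bsub>A\<^esub> c)
          = (a \<otimes>\<^bsub>M\<^esub> b) \<otimes>\<^bsub>A\<^esub> inv\<^bsub>A\<^esub> a \<otimes>\<^bsub>A\<^esub> (a \<otimes>\<^bsub>M\<^esub> c))"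

definition blam :: "'a monoid \<Rightarrow> 'a monoid \<Rightarrow> 'a \<Rightarrow> 'a \<Rightarrow> 'a" where
  "blam A M a b = inv\<^bsub>A\<^esub> a \<otimes>\<^bsub>A\<^esub> (a \<otimes>\<^bsub>M\<^esub> b)"

definition bsig :: "'a monoid \<Rightarrow> 'a \<Rightarrow> 'a \<Rightarrow> 'a" where
  "bsig A a b = inv\<^bsub>A\<^esub> a \<otimes>\<^bsub>A\<^esub> b \<otimes>\<^bsub>A\<^esub> a"

definition bstar :: "'a monoid \<Rightarrow> 'a monoid \<Rightarrow> 'a \<Rightarrow> 'a \<Rightarrow> 'a" where
  "bstar A M a b = inv\<^bsub>A\<^esub> a \<otimes>\<^bsub>A\<^esub> (a \<otimes>\<^bsub>M\<^esub> b) \<otimes>\<^bsub>A\<^esub> inv\<^bsub>A\<^esub> b"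

definition brace_ideal :: "'a monoid \<Rightarrow> 'a monoid \<Rightarrow> 'a set \<Rightarrow> bool" where
  "brace_ideal A M I \<longleftrightarrow> normal I A \<and> (\<forall>a\<in>carrier A. blam A M a ` I \<subseteq> I) \<and> normal I M"

definition brace_ideal_gen :: "'a monoid \<Rightarrow> 'a monoid \<Rightarrow> 'a set \<Rightarrow> 'a set" where
  "brace_ideal_gen A M S = \<Inter>{I. brace_ideal A M I \<and> S \<subseteq> I}"

definition brace_star_set :: "'a monoid \<Rightarrow> 'a monoid \<Rightarrow> 'a set \<Rightarrow> 'a set \<Rightarrow> 'a set" where
  "brace_star_set A M I J = generate A {bstar A M i j | i j. i \<in> I \<and> j \<in> J}"

definition brace_quotient_trivial :: "'a monoid \<Rightarrow> 'a monoid \<Rightarrow> 'a set \<Rightarrow> bool" where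
  "brace_quotient_trivial A M I \<longleftrightarrow> carrier (A Mod I) = carrier (M Mod I) \<and>
     (\<forall>x\<in>carrier (A Mod I). \<forall>y\<in>carrier (A Mod I).
        x \<otimes>\<^bsub>A Mod I\<^esub> y = x \<otimes>\<^bsub>M Mod I\<^esub> y)"

definition cyclic_group :: "('a, 'b) monoid_scheme \<Rightarrow> bool" where
  "cyclic_group G \<longleftrightarrow> (\<exists>g\<in>carrier G. generate G {g} = carrier G)"

definition group_center :: "('a, 'b) monoid_scheme \<Rightarrow> 'a set" where
  "group_center G = {z \<in> carrier G. \<forall>g\<in>carrier G. z \<otimes>\<^bsub>G\<^esub> g = g \<otimes>\<^bsub>G\<^esub> z}"

definition char_simple :: "('a, 'b) monoid_scheme \<Rightarrow> bool" where
  "char_simple G \<longleftrightarrow> carrier G \<noteq> {\<one>\<^bsub>G\<^esub>} \<and>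
     (\<forall>H. subgroup H G \<and> (\<forall>\<phi>\<in>iso G G. \<phi> ` H = H) \<longrightarrow> H = {\<one>\<^bsub>G\<^esub>} \<or> H = carrier G)"

end

theory Submission
  imports Defs
begin

text \<open>
  \<open>V\<close> is an ideal contained in every nonzero ideal, and \<open>B\<^sup>(\<^sup>3\<^sup>) = 0\<close> forces \<open>V * B = 0\<close>:
  either \<open>B * B = 0\<close>, or \<open>V \<subseteq> B * B\<close> and then \<open>V * B \<subseteq> B\<^sup>(\<^sup>3\<^sup>)\<close>.
  Conjugations and the maps \<open>\<lambda>\<^sub>a\<close> restrict to automorphisms of \<open>(V,+)\<close>, so a characteristic
  subgroup \<open>H\<close> of \<open>(V,+)\<close> is normal in \<open>(B,+)\<close> and \<open>\<lambda>\<close>-invariant; with \<open>H * B = 0\<close> this makes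
  \<open>H\<close> an ideal, so \<open>H = 0\<close> or \<open>H = V\<close>.
  A finite characteristically simple abelian group has prime exponent, its \<open>p\<close>-torsion being
  characteristic, and so is elementary abelian; in the non-abelian case the centre is a proper
  characteristic subgroup.
\<close>

section \<open>Elementary abelian groups\<close>

abbreviation elementary_abelian_group :: "nat \<Rightarrow> nat \<Rightarrow> (nat \<Rightarrow> int) monoid" where
  "elementary_abelian_group p n \<equiv> product_group {..<n} (\<lambda>_. integer_mod_group p)"

definition pow_comb :: "('a, 'b) monoid_scheme \<Rightarrow> (nat \<Rightarrow> 'a) \<Rightarrow> nat \<Rightarrow> (nat \<Rightarrow> int) \<Rightarrow> 'a" where
  "pow_comb G g n c = finprod G (\<lambda>i. g i [^]\<^bsub>G\<^esub> c i) {..<n}"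

lemma (in group) int_pow_mod_exponent:
  assumes x: "x \<in> carrier G" and xp: "x [^] p = \<one>"
  shows "x [^] (i mod int p) = x [^] i"
proof -
  have "ord x dvd p" using pow_eq_id[OF x] xp by simp
  moreover have "int p dvd i - i mod int p" by (simp add: minus_mod_eq_mult_div)
  ultimately show ?thesis using int_pow_eq[OF x] by (metis dvd_trans int_dvd_int_iff)
qed

lemma (in group) int_pow_in_subgroup_imp_mem:
  assumes S: "subgroup S G" and x: "x \<in> carrier G" and xp: "x [^] p = \<one>"
    and p: "Factorial_Ring.prime p" and e: "\<not> int p dvd e" and xe: "x [^] e \<in> S"
  shows "x \<in> S"
proof -
  have "coprime e (int p)"
    using p e by (metis prime_imp_coprime coprime_commute prime_nat_int_transfer)
  then obtain u v where uv: "u * e + v * int p = 1" by (metis bezout_int coprime_iff_gcd_eq_1)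
  have xpi: "x [^] int p = \<one>" using xp x by (simp add: int_pow_int)
  have "x = x [^] (u * e + v * int p)" using x uv by simp
  also have "\<dots> = (x [^] e) [^] u \<otimes> (x [^] int p) [^] v"
    using x by (simp add: int_pow_mult int_pow_pow mult.commute)
  also have "\<dots> = (x [^] e) [^] u" using x xpi by simp
  also have "\<dots> \<in> S" by (rule subgroup_int_pow_closed[OF S xe])
  finally show ?thesis .
qed

context comm_group
begin

lemma pow_comb_closed: "g \<in> {..<n} \<rightarrow> carrier G \<Longrightarrow> pow_comb G g n c \<in> carrier G"
  by (auto simp: pow_comb_def intro!: finprod_closed)

lemma pow_comb_cong:
  "h \<in> {..<n} \<rightarrow> carrier G \<Longrightarrow> (\<And>i. i < n \<Longrightarrow> g i = h i \<and> c i = d i) \<Longrightarrow>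
    pow_comb G g n c = pow_comb G h n d"
  unfolding pow_comb_def by (rule finprod_cong') auto

lemma pow_comb_Suc:
  "g \<in> {..<Suc n} \<rightarrow> carrier G \<Longrightarrow> pow_comb G g (Suc n) c = pow_comb G g n c \<otimes> g n [^] c n"
  by (simp add: pow_comb_def lessThan_Suc finprod_insert m_comm Pi_def)

lemma pow_comb_extend:
  "g \<in> {..<n} \<rightarrow> carrier G \<Longrightarrow> x \<in> carrier G \<Longrightarrow>
    pow_comb G (g(n := x)) (Suc n) c = pow_comb G g n (restrict c {..<n}) \<otimes> x [^] c n"
  using pow_comb_Suc[of "g(n := x)" n c] pow_comb_cong[of g n "g(n := x)" c "restrict c {..<n}"]
  by (simp add: Pi_def)

lemma pow_comb_hom:
  assumes p: "p > 0" and expo: "\<And>x. x \<in> carrier G \<Longrightarrow> x [^] p = \<one>"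
    and g: "g \<in> {..<n} \<rightarrow> carrier G"
  shows "pow_comb G g n \<in> hom (elementary_abelian_group p n) G"
proof (rule homI)
  fix c d assume "c \<in> carrier (elementary_abelian_group p n)" "d \<in> carrier (elementary_abelian_group p n)"
  have "pow_comb G g n (c \<otimes>\<^bsub>elementary_abelian_group p n\<^esub> d) = pow_comb G g n (\<lambda>i. (c i + d i) mod int p)"
    using g by (intro pow_comb_cong) auto
  also have "\<dots> = finprod G (\<lambda>i. g i [^] c i \<otimes> g i [^] d i) {..<n}"
    unfolding pow_comb_def using g
    by (intro finprod_cong') (auto simp: int_pow_mod_exponent expo int_pow_mult Pi_def)
  also have "\<dots> = pow_comb G g n c \<otimes> pow_comb G g n d"
    using g by (simp add: pow_comb_def finprod_multf Pi_def)
  finally show "pow_comb G g n (c \<otimes>\<^bsub>elementary_abelian_group p n\<^esub> d) = pow_comb G g n c \<otimes> pow_comb G g n d" .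
qed (use g pow_comb_closed in blast)

lemma pow_comb_inj_extend:
  assumes p: "Factorial_Ring.prime p" and expo: "\<And>x. x \<in> carrier G \<Longrightarrow> x [^] p = \<one>"
    and g: "g \<in> {..<n} \<rightarrow> carrier G"
    and inj: "inj_on (pow_comb G g n) (carrier (elementary_abelian_group p n))"
    and x: "x \<in> carrier G"
    and x_notin: "x \<notin> pow_comb G g n ` carrier (elementary_abelian_group p n)"
  shows "inj_on (pow_comb G (g(n := x)) (Suc n)) (carrier (elementary_abelian_group p (Suc n)))"
proof -
  let ?E = "elementary_abelian_group p" and ?h = "pow_comb G g n"
    and ?h' = "pow_comb G (g(n := x)) (Suc n)"
  have p0: "p > 0" using p prime_gt_0_nat by blast
  interpret h: group_hom "?E n" G ?h
    using pow_comb_hom[OF p0 expo g] by (simp add: group_hom_def group_hom_axioms_def)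
  interpret h': group_hom "?E (Suc n)" G ?h'
    using pow_comb_hom[OF p0 expo] g x by (simp add: group_hom_def group_hom_axioms_def Pi_def)
  have S: "subgroup (?h ` carrier (?E n)) G" by (rule h.img_is_subgroup)
  have "kernel (?E (Suc n)) G ?h' \<subseteq> {\<one>\<^bsub>?E (Suc n)\<^esub>}"
  proof
    fix c assume "c \<in> kernel (?E (Suc n)) G ?h'"
    then have c: "c \<in> carrier (?E (Suc n))" and hc: "?h' c = \<one>" by (auto simp: kernel_def)
    let ?c = "restrict c {..<n}"
    have c': "?c \<in> carrier (?E n)" using c by (auto simp: PiE_iff)
    have cn: "0 \<le> c n \<and> c n < int p" using c p0 by (auto simp: PiE_iff carrier_integer_mod_group)
    have xc: "x [^] c n = inv (?h ?c)"
      using hc pow_comb_extend[OF g x] x c' h.hom_closed by (metis inv_equality int_pow_closed m_comm)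
    have "c n = 0"
    proof (rule ccontr)
      assume "c n \<noteq> 0"
      then have "\<not> int p dvd c n" using cn zdvd_not_zless by fastforce
      moreover have "x [^] c n \<in> ?h ` carrier (?E n)"
        using xc c' S by (simp add: subgroup.m_inv_closed)
      ultimately show False
        using int_pow_in_subgroup_imp_mem[OF S x expo[OF x] p] x_notin by blast
    qed
    then have "?h ?c = \<one>" using xc c' by (metis h.hom_closed int_pow_0 inv_inv inv_one)
    then have "?c \<in> kernel (?E n) G ?h" using c' by (simp add: kernel_def)
    then have "?c = \<one>\<^bsub>?E n\<^esub>" using h.inj_iff_trivial_ker inj by blast
    then show "c \<in> {\<one>\<^bsub>?E (Suc n)\<^esub>}"
      using c \<open>c n = 0\<close> by (auto simp: PiE_iff fun_eq_iff extensional_def less_Suc_eq) metis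
  qed
  moreover have "\<one>\<^bsub>?E (Suc n)\<^esub> \<in> kernel (?E (Suc n)) G ?h'"
    using h'.G.one_closed by (simp add: kernel_def del: one_product_group)
  ultimately show ?thesis using h'.inj_iff_trivial_ker by blast
qed

theorem exponent_prime_imp_elementary_abelian:
  assumes fin: "finite (carrier G)" and p: "Factorial_Ring.prime p"
    and expo: "\<And>x. x \<in> carrier G \<Longrightarrow> x [^] p = \<one>"
  shows "\<exists>n. G \<cong> elementary_abelian_group p n"
proof -
  let ?E = "elementary_abelian_group p"
  text \<open>A family \<open>g\<^sub>0, \<dots>, g\<^sub>n\<^sub>-\<^sub>1\<close> is independent if \<open>c \<mapsto> \<Prod> g\<^sub>i [^] c\<^sub>i\<close> is injective on \<open>(\<int>/p)\<^sup>n\<close>;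
    a maximal independent family also generates \<open>G\<close>.\<close>
  define independent where "independent n \<longleftrightarrow>
    (\<exists>g \<in> {..<n} \<rightarrow> carrier G. inj_on (pow_comb G g n) (carrier (?E n)))" for n
  have p0: "p > 0" and p2: "2 \<le> p" using p prime_gt_0_nat prime_ge_2_nat by blast+
  have "independent 0" by (auto simp: independent_def)
  have bound: "n < card (carrier G)" if ind: "independent n" for n
  proof -
    obtain g where g: "g \<in> {..<n} \<rightarrow> carrier G" and inj: "inj_on (pow_comb G g n) (carrier (?E n))"
      using ind by (auto simp: independent_def)
    have "pow_comb G g n ` carrier (?E n) \<subseteq> carrier G" using pow_comb_closed[OF g] by blast
    then have "p ^ n \<le> card (carrier G)"
      using card_inj_on_le[OF inj _ fin] p0 by (simp add: card_PiE carrier_integer_mod_group)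
    moreover have "n < 2 ^ n" by (rule less_exp)
    moreover have "(2::nat) ^ n \<le> p ^ n" using p2 by (simp add: power_mono)
    ultimately show ?thesis by linarith
  qed
  define n where "n = (GREATEST n. independent n)"
  have bounded: "\<And>m. independent m \<Longrightarrow> m \<le> card (carrier G)" using bound by (simp add: less_imp_le)
  have max: "independent n" unfolding n_def using \<open>independent 0\<close> bounded by (metis GreatestI_nat)
  have not_Suc: "\<not> independent (Suc n)" unfolding n_def using bounded by (metis Greatest_le_nat Suc_n_not_le_n)
  obtain g where g: "g \<in> {..<n} \<rightarrow> carrier G" and inj: "inj_on (pow_comb G g n) (carrier (?E n))"
    using max by (auto simp: independent_def n_def)
  have hom: "pow_comb G g n \<in> hom (?E n) G" by (rule pow_comb_hom[OF p0 expo g])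
  have "pow_comb G g n ` carrier (?E n) = carrier G"
  proof (rule ccontr)
    assume "pow_comb G g n ` carrier (?E n) \<noteq> carrier G"
    then obtain x where x: "x \<in> carrier G" "x \<notin> pow_comb G g n ` carrier (?E n)"
      using hom by (auto simp: hom_def)
    have "g(n := x) \<in> {..<Suc n} \<rightarrow> carrier G" using g x by (auto simp: Pi_def)
    then have "independent (Suc n)"
      using pow_comb_inj_extend[OF p expo g inj x] by (auto simp: independent_def)
    then show False using not_Suc n_def by simp
  qed
  then have "pow_comb G g n \<in> iso (?E n) G" using hom inj by (simp add: iso_iff)
  then have "?E n \<cong> G" by (auto simp: is_iso_def)
  then show ?thesis by (metis group.iso_sym product_group group_integer_mod_group)
qed

end

section \<open>Characteristic subgroups\<close>

definition characteristic_subgroup :: "'a set \<Rightarrow> ('a, 'b) monoid_scheme \<Rightarrow> bool" where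
  "characteristic_subgroup H G \<longleftrightarrow> subgroup H G \<and> (\<forall>\<phi> \<in> iso G G. \<phi> ` H = H)"

lemma char_simpleD:
  "char_simple G \<Longrightarrow> characteristic_subgroup H G \<Longrightarrow> H = {\<one>\<^bsub>G\<^esub>} \<or> H = carrier G"
  by (simp add: char_simple_def characteristic_subgroup_def)

lemma char_simpleI:
  "carrier G \<noteq> {\<one>\<^bsub>G\<^esub>} \<Longrightarrow> (\<And>H. characteristic_subgroup H G \<Longrightarrow> H \<noteq> {\<one>\<^bsub>G\<^esub>} \<Longrightarrow> carrier G \<subseteq> H)
    \<Longrightarrow> char_simple G"
  unfolding char_simple_def characteristic_subgroup_def by (metis subgroup.subset subset_antisym)

lemma (in group) characteristic_subgroupI:
  assumes H: "subgroup H G" and invariant: "\<And>\<phi> h. \<phi> \<in> iso G G \<Longrightarrow> h \<in> H \<Longrightarrow> \<phi> h \<in> H"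
  shows "characteristic_subgroup H G"
  unfolding characteristic_subgroup_def
proof (intro conjI H ballI equalityI)
  fix \<phi> assume \<phi>: "\<phi> \<in> iso G G"
  show "\<phi> ` H \<subseteq> H" using invariant[OF \<phi>] by blast
  show "H \<subseteq> \<phi> ` H"
  proof
    fix h assume h: "h \<in> H"
    then have "h \<in> \<phi> ` carrier G" using \<phi> subgroup.mem_carrier[OF H] by (simp add: iso_iff)
    then have "h = \<phi> (inv_into (carrier G) \<phi> h)" by (simp add: f_inv_into_f)
    moreover have "inv_into (carrier G) \<phi> h \<in> H" using invariant[OF iso_set_sym[OF \<phi>] h] .
    ultimately show "h \<in> \<phi> ` H" by blast
  qed
qed

lemma (in comm_group) exponent_characteristic_subgroup:
  "characteristic_subgroup {x \<in> carrier G. x [^] (p::nat) = \<one>} G"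
proof (rule characteristic_subgroupI)
  show "subgroup {x \<in> carrier G. x [^] p = \<one>} G"
    by unfold_locales (auto simp: pow_mult_distrib m_comm nat_pow_inv)
  fix \<phi> h assume \<phi>: "\<phi> \<in> iso G G" and h: "h \<in> {x \<in> carrier G. x [^] p = \<one>}"
  then have "\<phi> h [^] p = \<phi> (h [^] p)" "\<phi> h \<in> carrier G"
    using hom_nat_pow[OF _ _ is_group is_group] by (auto simp: iso_iff)
  then show "\<phi> h \<in> {x \<in> carrier G. x [^] p = \<one>}"
    using h \<phi> hom_one[OF _ is_group is_group] by (auto simp: iso_iff)
qed

lemma (in group) center_subgroup: "subgroup (group_center G) G"
proof
  show "group_center G \<subseteq> carrier G" by (auto simp: group_center_def)
  show "\<one> \<in> group_center G" by (simp add: group_center_def)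
  fix x y assume x: "x \<in> group_center G" and y: "y \<in> group_center G"
  then have xy: "x \<in> carrier G" "y \<in> carrier G" by (auto simp: group_center_def)
  have "x \<otimes> y \<otimes> g = g \<otimes> (x \<otimes> y)" if g: "g \<in> carrier G" for g
  proof -
    have "x \<otimes> y \<otimes> g = x \<otimes> (g \<otimes> y)" using y xy g by (simp add: m_assoc group_center_def)
    also have "\<dots> = x \<otimes> g \<otimes> y" using xy g by (simp add: m_assoc)
    also have "\<dots> = g \<otimes> (x \<otimes> y)" using x xy g by (simp add: m_assoc group_center_def)
    finally show ?thesis .
  qed
  then show "x \<otimes> y \<in> group_center G" using xy by (simp add: group_center_def)
next
  fix x assume x: "x \<in> group_center G"
  have x': "x \<in> carrier G" using x by (simp add: group_center_def)
  have "inv x \<otimes> g = g \<otimes> inv x" if g: "g \<in> carrier G" for g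
  proof -
    have "inv x \<otimes> g = inv x \<otimes> (g \<otimes> x) \<otimes> inv x" using x' g by (simp add: m_assoc)
    also have "\<dots> = inv x \<otimes> (x \<otimes> g) \<otimes> inv x" using x g by (simp add: group_center_def)
    also have "\<dots> = g \<otimes> inv x" using x' g by (simp flip: m_assoc)
    finally show ?thesis .
  qed
  then show "inv x \<in> group_center G" using x' by (simp add: group_center_def)
qed

lemma (in group) center_iso_invariant:
  assumes \<phi>: "\<phi> \<in> iso G G" and z: "z \<in> group_center G"
  shows "\<phi> z \<in> group_center G"
proof -
  have hom: "\<phi> \<in> hom G G" and onto: "\<phi> ` carrier G = carrier G" using \<phi> by (auto simp: iso_iff)
  have zc: "z \<in> carrier G" using z by (simp add: group_center_def)
  have "\<phi> z \<otimes> g = g \<otimes> \<phi> z" if g: "g \<in> carrier G" for g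
  proof -
    obtain h where h: "h \<in> carrier G" "g = \<phi> h" using g onto by blast
    have "z \<otimes> h = h \<otimes> z" using z h by (simp add: group_center_def)
    then have "\<phi> (z \<otimes> h) = \<phi> (h \<otimes> z)" by simp
    then show ?thesis using hom h zc by (simp add: hom_mult)
  qed
  then show ?thesis using hom zc by (simp add: group_center_def hom_in_carrier)
qed

lemma (in group) center_characteristic_subgroup: "characteristic_subgroup (group_center G) G"
  using center_subgroup center_iso_invariant by (rule characteristic_subgroupI)

lemma (in group) char_simple_noncomm_center:
  assumes "char_simple G" and "\<not> comm_group G"
  shows "group_center G = {\<one>}"
proof -
  have "group_center G \<noteq> carrier G"
    using assms(2) group_comm_groupI by (auto simp: group_center_def)
  then show ?thesis using char_simpleD[OF assms(1) center_characteristic_subgroup] by simp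
qed

lemma (in comm_group) char_simple_prime_exponent:
  assumes fin: "finite (carrier G)" and cs: "char_simple G"
  obtains p :: nat where "Factorial_Ring.prime p" and "\<And>x. x \<in> carrier G \<Longrightarrow> x [^] p = \<one>"
proof -
  obtain g where g: "g \<in> carrier G" "g \<noteq> \<one>" using cs by (auto simp: char_simple_def)
  then have "ord g \<noteq> 1" using ord_eq_1 by blast
  then obtain p where p: "Factorial_Ring.prime p" "p dvd ord g" using prime_factor_nat by blast
  have "ord g \<noteq> 0" using ord_ge_1[OF fin g(1)] by simp
  then have "ord g div p dvd ord g" "ord g div p \<noteq> 0" "ord g div (ord g div p) = p"
    using p by (auto simp: dvd_div_eq_0_iff)
  then have "ord (g [^] (ord g div p)) = p" using ord_pow[OF g(1)] by simp
  moreover have "p \<noteq> 1" using p by auto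
  ultimately have "g [^] (ord g div p) \<noteq> \<one>" "(g [^] (ord g div p)) [^] p = \<one>"
    using g(1) ord_eq_1 pow_ord_eq_1 by (metis nat_pow_closed)+
  then have "{x \<in> carrier G. x [^] p = \<one>} \<noteq> {\<one>}" using g by force
  then have "{x \<in> carrier G. x [^] p = \<one>} = carrier G"
    using char_simpleD[OF cs exponent_characteristic_subgroup[of p]] by simp
  then have "\<And>x. x \<in> carrier G \<Longrightarrow> x [^] p = \<one>" by blast
  with p(1) show thesis by (rule that)
qed

corollary (in comm_group) char_simple_imp_elementary_abelian:
  assumes "finite (carrier G)" and "char_simple G"
  shows "\<exists>p n. Factorial_Ring.prime p \<and> G \<cong> elementary_abelian_group p n"
  using char_simple_prime_exponent[OF assms] exponent_prime_imp_elementary_abelian[OF assms(1)] by metis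

lemma (in group) finite_char_simple_structure:
  assumes "finite (carrier G)" and "char_simple G"
  shows "(comm_group G \<longrightarrow> (\<exists>p n. Factorial_Ring.prime p \<and> G \<cong> elementary_abelian_group p n))
    \<and> (\<not> comm_group G \<longrightarrow> group_center G = {\<one>})"
  using comm_group.char_simple_imp_elementary_abelian char_simple_noncomm_center assms by blast

lemma (in group) two_elements_quotient_ne_one:
  assumes "Y \<subseteq> carrier G" and "finite Y" and "2 \<le> card Y"
  obtains x y where "x \<in> Y" and "y \<in> Y" and "x \<otimes> inv y \<noteq> \<one>"
proof -
  have "\<not> (\<forall>x\<in>Y. \<forall>y\<in>Y. x = y)" using assms(2,3) card_le_Suc0_iff_eq[of Y] by simp
  then obtain x y where xy: "x \<in> Y" "y \<in> Y" "x \<noteq> y" by blast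
  moreover have "x \<otimes> inv y \<noteq> \<one>"
  proof
    assume "x \<otimes> inv y = \<one>"
    then have "inv (inv y) = x" using xy assms(1) by (intro inv_equality) auto
    then show False using xy assms(1) by auto
  qed
  ultimately show thesis using that by blast
qed

section \<open>Normal subgroups and automorphisms\<close>

lemma (in group) mult_inv_cancel_left: "x \<in> carrier G \<Longrightarrow> y \<in> carrier G \<Longrightarrow> x \<otimes> (inv x \<otimes> y) = y"
  by (simp flip: m_assoc)

lemma (in group) inv_mult_cancel_left: "x \<in> carrier G \<Longrightarrow> y \<in> carrier G \<Longrightarrow> inv x \<otimes> (x \<otimes> y) = y"
  by (simp flip: m_assoc)

lemma (in group) conjugation_hom: "g \<in> carrier G \<Longrightarrow> (\<lambda>h. g \<otimes> h \<otimes> inv g) \<in> hom G G"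
  by (rule homI) (simp_all add: m_assoc inv_mult_cancel_left)

lemma (in group) hom_restrict_iso:
  assumes V: "subgroup V G" "finite V"
    and f: "f \<in> hom G G" "inj_on f V" "f ` V \<subseteq> V"
  shows "f \<in> iso (G\<lparr>carrier := V\<rparr>) (G\<lparr>carrier := V\<rparr>)"
proof -
  have "f \<in> hom (G\<lparr>carrier := V\<rparr>) (G\<lparr>carrier := V\<rparr>)"
    using f subgroup.mem_carrier[OF V(1)] by (auto intro!: homI simp: hom_mult image_subset_iff)
  then show ?thesis using f V endo_inj_surj[OF V(2) f(3,2)] by (simp add: iso_iff)
qed

lemma (in group) normal_Inter:
  assumes "F \<noteq> {}" and "\<And>H. H \<in> F \<Longrightarrow> H \<lhd> G"
  shows "\<Inter>F \<lhd> G"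
  using assms subgroups_Inter[of F] by (auto simp: normal_inv_iff)

lemma (in group) normal_generateI':
  assumes H: "H \<subseteq> carrier G"
    and conj: "\<And>h g. h \<in> H \<Longrightarrow> g \<in> carrier G \<Longrightarrow> g \<otimes> h \<otimes> inv g \<in> generate G H"
  shows "generate G H \<lhd> G"
proof (rule normal_invI[OF generate_is_subgroup[OF H]])
  fix g h assume g: "g \<in> carrier G" and h: "h \<in> generate G H"
  from h show "g \<otimes> h \<otimes> inv g \<in> generate G H"
  proof (induction h rule: generate.induct)
    case one
    show ?case using g by (simp add: generate.one)
  next
    case (incl h)
    then show ?case using g by (rule conj)
  next
    case (inv h)
    then have "g \<otimes> inv h \<otimes> inv g = inv (g \<otimes> h \<otimes> inv g)"
      using H g by (auto simp: inv_mult_group m_assoc)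
    then show ?case using generate_m_inv_closed[OF H conj[OF inv g]] by simp
  next
    case (eng h1 h2)
    then have "g \<otimes> (h1 \<otimes> h2) \<otimes> inv g = (g \<otimes> h1 \<otimes> inv g) \<otimes> (g \<otimes> h2 \<otimes> inv g)"
      using generate_in_carrier[OF H] g by (simp add: m_assoc inv_mult_cancel_left)
    then show ?case using generate.eng[OF eng.IH] by simp
  qed
qed

section \<open>Skew braces\<close>

locale skew_brace =
  fixes A M :: "'a monoid"
  assumes skew_left_brace: "skew_left_brace A M"
begin

sublocale A: group A using skew_left_brace by (simp add: skew_left_brace_def)
sublocale M: group M using skew_left_brace by (simp add: skew_left_brace_def)

lemma carrier_M [simp]: "carrier M = carrier A"
  using skew_left_brace by (simp add: skew_left_brace_def)

lemma brace_law:
  "a \<in> carrier A \<Longrightarrow> b \<in> carrier A \<Longrightarrow> c \<in> carrier A \<Longrightarrow>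
    a \<otimes>\<^bsub>M\<^esub> (b \<otimes>\<^bsub>A\<^esub> c) = (a \<otimes>\<^bsub>M\<^esub> b) \<otimes>\<^bsub>A\<^esub> inv\<^bsub>A\<^esub> a \<otimes>\<^bsub>A\<^esub> (a \<otimes>\<^bsub>M\<^esub> c)"
  using skew_left_brace by (simp add: skew_left_brace_def)

lemma circ_closed [simp]: "a \<in> carrier A \<Longrightarrow> b \<in> carrier A \<Longrightarrow> a \<otimes>\<^bsub>M\<^esub> b \<in> carrier A"
  using M.m_closed by simp

lemma inv_M_closed [simp]: "a \<in> carrier A \<Longrightarrow> inv\<^bsub>M\<^esub> a \<in> carrier A"
  using M.inv_closed by simp

lemma circ_eq_lam: "a \<in> carrier A \<Longrightarrow> b \<in> carrier A \<Longrightarrow> a \<otimes>\<^bsub>M\<^esub> b = a \<otimes>\<^bsub>A\<^esub> blam A M a b"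
  by (simp add: blam_def flip: A.m_assoc)

lemma lam_closed [simp]: "a \<in> carrier A \<Longrightarrow> b \<in> carrier A \<Longrightarrow> blam A M a b \<in> carrier A"
  by (simp add: blam_def)

lemma star_closed [simp]: "a \<in> carrier A \<Longrightarrow> b \<in> carrier A \<Longrightarrow> bstar A M a b \<in> carrier A"
  by (simp add: bstar_def)

lemma lam_eq_star: "a \<in> carrier A \<Longrightarrow> b \<in> carrier A \<Longrightarrow> blam A M a b = bstar A M a b \<otimes>\<^bsub>A\<^esub> b"
  by (simp add: blam_def bstar_def A.m_assoc)

lemma lam_mult:
  "a \<in> carrier A \<Longrightarrow> b \<in> carrier A \<Longrightarrow> c \<in> carrier A \<Longrightarrow>
    blam A M a (b \<otimes>\<^bsub>A\<^esub> c) = blam A M a b \<otimes>\<^bsub>A\<^esub> blam A M a c"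
  by (simp add: blam_def brace_law A.m_assoc)

lemma lam_hom: "a \<in> carrier A \<Longrightarrow> blam A M a \<in> hom A A"
  by (auto intro!: homI simp: lam_mult)

lemma lam_inv: "a \<in> carrier A \<Longrightarrow> b \<in> carrier A \<Longrightarrow> blam A M a (inv\<^bsub>A\<^esub> b) = inv\<^bsub>A\<^esub> blam A M a b"
  using lam_hom by (simp add: group_hom.hom_inv group_hom_def group_hom_axioms_def A.group_axioms)

lemma one_M [simp]: "\<one>\<^bsub>M\<^esub> = \<one>\<^bsub>A\<^esub>"
proof -
  have "\<one>\<^bsub>A\<^esub> = inv\<^bsub>A\<^esub> \<one>\<^bsub>M\<^esub>"
    using brace_law[of "\<one>\<^bsub>M\<^esub>" "\<one>\<^bsub>A\<^esub>" "\<one>\<^bsub>A\<^esub>"] M.one_closed by simp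
  then show ?thesis using M.one_closed by (metis A.inv_inv A.inv_one carrier_M)
qed

lemma lam_circ:
  assumes a: "a \<in> carrier A" and b: "b \<in> carrier A" and c: "c \<in> carrier A"
  shows "blam A M (a \<otimes>\<^bsub>M\<^esub> b) c = blam A M a (blam A M b c)"
proof -
  have "blam A M a (blam A M b c) = inv\<^bsub>A\<^esub> (blam A M a b) \<otimes>\<^bsub>A\<^esub> blam A M a (b \<otimes>\<^bsub>M\<^esub> c)"
    using a b c by (simp add: blam_def[of A M b] lam_mult lam_inv)
  also have "\<dots> = inv\<^bsub>A\<^esub> (a \<otimes>\<^bsub>M\<^esub> b) \<otimes>\<^bsub>A\<^esub> (a \<otimes>\<^bsub>M\<^esub> (b \<otimes>\<^bsub>M\<^esub> c))"
    using a b c by (simp add: blam_def A.inv_mult_group A.m_assoc) (simp flip: A.m_assoc)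
  finally show ?thesis using a b c by (simp add: blam_def M.m_assoc)
qed

lemma one_circ [simp]: "c \<in> carrier A \<Longrightarrow> \<one>\<^bsub>A\<^esub> \<otimes>\<^bsub>M\<^esub> c = c"
  using M.l_one[of c] by simp

lemma lam_one: "c \<in> carrier A \<Longrightarrow> blam A M \<one>\<^bsub>A\<^esub> c = c"
  by (simp add: blam_def)

lemma lam_lam_inv_M: "a \<in> carrier A \<Longrightarrow> c \<in> carrier A \<Longrightarrow> blam A M a (blam A M (inv\<^bsub>M\<^esub> a) c) = c"
  using lam_circ[of a "inv\<^bsub>M\<^esub> a" c] M.r_inv[of a] by (simp add: lam_one)

lemma lam_inv_M_lam: "a \<in> carrier A \<Longrightarrow> c \<in> carrier A \<Longrightarrow> blam A M (inv\<^bsub>M\<^esub> a) (blam A M a c) = c"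
  using lam_circ[of "inv\<^bsub>M\<^esub> a" a c] M.l_inv[of a] by (simp add: lam_one)

lemma lam_inj: "a \<in> carrier A \<Longrightarrow> inj_on (blam A M a) (carrier A)"
  by (metis inj_onI lam_inv_M_lam)

lemma subgroup_circ:
  assumes I: "subgroup I A" and lam: "\<And>a h. a \<in> carrier A \<Longrightarrow> h \<in> I \<Longrightarrow> blam A M a h \<in> I"
  shows "subgroup I M"
proof
  have Ic: "\<And>h. h \<in> I \<Longrightarrow> h \<in> carrier A" using subgroup.subset[OF I] by blast
  show "I \<subseteq> carrier M" using subgroup.subset[OF I] by simp
  show "\<one>\<^bsub>M\<^esub> \<in> I" using subgroup.one_closed[OF I] by simp
  fix h k assume h: "h \<in> I" and k: "k \<in> I"
  then show "h \<otimes>\<^bsub>M\<^esub> k \<in> I" using Ic by (simp add: circ_eq_lam subgroup.m_closed[OF I] lam)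
  text \<open>From \<open>\<one> = inv\<^bsub>M\<^esub> h \<otimes>\<^bsub>M\<^esub> h\<close> one reads off \<open>inv\<^bsub>M\<^esub> h = blam (inv\<^bsub>M\<^esub> h) (inv\<^bsub>A\<^esub> h)\<close>.\<close>
  have "inv\<^bsub>M\<^esub> h \<otimes>\<^bsub>A\<^esub> blam A M (inv\<^bsub>M\<^esub> h) h = \<one>\<^bsub>A\<^esub>"
    using h Ic M.l_inv[of h] by (simp flip: circ_eq_lam)
  then have "inv\<^bsub>M\<^esub> h = blam A M (inv\<^bsub>M\<^esub> h) (inv\<^bsub>A\<^esub> h)"
    using h Ic by (simp add: lam_inv A.inv_equality)
  then show "inv\<^bsub>M\<^esub> h \<in> I" using h Ic lam subgroup.m_inv_closed[OF I] by (metis inv_M_closed)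
qed

lemma circ_right_coset_subset:
  assumes I: "normal I A" and lam: "\<And>a h. a \<in> carrier A \<Longrightarrow> h \<in> I \<Longrightarrow> blam A M a h \<in> I"
    and star: "\<And>h b. h \<in> I \<Longrightarrow> b \<in> carrier A \<Longrightarrow> bstar A M h b \<in> I"
    and h: "h \<in> I" and y: "y \<in> carrier A"
  shows "\<exists>k \<in> I. h \<otimes>\<^bsub>M\<^esub> y = y \<otimes>\<^bsub>M\<^esub> k"
proof -
  have sub: "subgroup I A" using I by (simp add: normal_def)
  have hc: "h \<in> carrier A" using h subgroup.mem_carrier[OF sub] by blast
  define h' where "h' = inv\<^bsub>A\<^esub> y \<otimes>\<^bsub>A\<^esub> (h \<otimes>\<^bsub>A\<^esub> bstar A M h y) \<otimes>\<^bsub>A\<^esub> y"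
  have "h \<otimes>\<^bsub>A\<^esub> bstar A M h y \<in> I" by (rule subgroup.m_closed[OF sub h star[OF h y]])
  moreover have "\<And>x k. x \<in> carrier A \<Longrightarrow> k \<in> I \<Longrightarrow> x \<otimes>\<^bsub>A\<^esub> k \<otimes>\<^bsub>A\<^esub> inv\<^bsub>A\<^esub> x \<in> I"
    using I A.normal_inv_iff by blast
  ultimately have h': "h' \<in> I" using y A.inv_inv[OF y] A.inv_closed[OF y] unfolding h'_def by metis
  have h'c: "h' \<in> carrier A" using h' subgroup.mem_carrier[OF sub] by blast
  have "h \<otimes>\<^bsub>M\<^esub> y = y \<otimes>\<^bsub>A\<^esub> h'"
    using hc y by (simp add: circ_eq_lam lam_eq_star h'_def flip: A.m_assoc)
  also have "\<dots> = y \<otimes>\<^bsub>M\<^esub> blam A M (inv\<^bsub>M\<^esub> y) h'"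
    using y h'c by (simp only: circ_eq_lam inv_M_closed lam_closed lam_lam_inv_M)
  finally have "h \<otimes>\<^bsub>M\<^esub> y = y \<otimes>\<^bsub>M\<^esub> blam A M (inv\<^bsub>M\<^esub> y) h'" .
  moreover have "blam A M (inv\<^bsub>M\<^esub> y) h' \<in> I" using lam y h' by simp
  ultimately show ?thesis by blast
qed

lemma brace_idealI:
  assumes I: "normal I A" and lam: "\<And>a h. a \<in> carrier A \<Longrightarrow> h \<in> I \<Longrightarrow> blam A M a h \<in> I"
    and star: "\<And>h b. h \<in> I \<Longrightarrow> b \<in> carrier A \<Longrightarrow> bstar A M h b \<in> I"
  shows "brace_ideal A M I"
proof -
  have subM: "subgroup I M" using subgroup_circ[OF _ lam] I by (simp add: normal_def)
  have "x \<otimes>\<^bsub>M\<^esub> h \<otimes>\<^bsub>M\<^esub> inv\<^bsub>M\<^esub> x \<in> I" if x: "x \<in> carrier M" and h: "h \<in> I" for x h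
  proof -
    obtain k where k: "k \<in> I" "h \<otimes>\<^bsub>M\<^esub> inv\<^bsub>M\<^esub> x = inv\<^bsub>M\<^esub> x \<otimes>\<^bsub>M\<^esub> k"
      using circ_right_coset_subset[OF I lam star h, of "inv\<^bsub>M\<^esub> x"] x by auto
    have hk: "h \<in> carrier A" "k \<in> carrier A" using h k subgroup.mem_carrier[OF subM] by auto
    have "x \<otimes>\<^bsub>M\<^esub> h \<otimes>\<^bsub>M\<^esub> inv\<^bsub>M\<^esub> x = x \<otimes>\<^bsub>M\<^esub> (inv\<^bsub>M\<^esub> x \<otimes>\<^bsub>M\<^esub> k)"
      using x hk k(2) by (simp add: M.m_assoc)
    also have "\<dots> = k" using x hk by (simp flip: M.m_assoc)
    finally show ?thesis using k(1) by simp
  qed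
  then have "normal I M" using subM by (simp add: M.normal_inv_iff)
  then show ?thesis using I lam by (auto simp: brace_ideal_def)
qed

lemma brace_ideal_Inter:
  assumes "F \<noteq> {}" and ideals: "\<And>I. I \<in> F \<Longrightarrow> brace_ideal A M I"
  shows "brace_ideal A M (\<Inter>F)"
proof -
  have "\<Inter>F \<lhd> A" "\<Inter>F \<lhd> M"
    using assms A.normal_Inter M.normal_Inter by (auto simp: brace_ideal_def)
  moreover have "blam A M a ` \<Inter>F \<subseteq> \<Inter>F" if "a \<in> carrier A" for a
    using ideals that by (fastforce simp: brace_ideal_def)
  ultimately show ?thesis by (simp add: brace_ideal_def)
qed

lemma brace_ideal_gen:
  assumes "S \<subseteq> carrier A"
  shows "brace_ideal A M (brace_ideal_gen A M S)" and "S \<subseteq> brace_ideal_gen A M S"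
proof -
  have "brace_ideal A M (carrier A)"
    by (rule brace_idealI) (auto simp: A.normal_inv_iff A.subgroup_self)
  then show "brace_ideal A M (brace_ideal_gen A M S)"
    using assms unfolding brace_ideal_gen_def by (intro brace_ideal_Inter) auto
  show "S \<subseteq> brace_ideal_gen A M S" by (auto simp: brace_ideal_gen_def)
qed

lemma star_conj:
  "a \<in> carrier A \<Longrightarrow> x \<in> carrier A \<Longrightarrow> c \<in> carrier A \<Longrightarrow>
    x \<otimes>\<^bsub>A\<^esub> bstar A M a c \<otimes>\<^bsub>A\<^esub> inv\<^bsub>A\<^esub> x = inv\<^bsub>A\<^esub> bstar A M a x \<otimes>\<^bsub>A\<^esub> bstar A M a (x \<otimes>\<^bsub>A\<^esub> c)"
  by (simp add: bstar_def brace_law A.inv_mult_group A.m_assoc A.mult_inv_cancel_left A.inv_mult_cancel_left)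

lemma brace_ideal_star_set: "brace_ideal A M (brace_star_set A M (carrier A) (carrier A))"
proof -
  let ?S = "{bstar A M a b | a b. a \<in> carrier A \<and> b \<in> carrier A}"
  have S: "?S \<subseteq> carrier A" by auto
  have gen_carrier: "\<And>h. h \<in> generate A ?S \<Longrightarrow> h \<in> carrier A"
    using A.generate_in_carrier[OF S] by blast
  show ?thesis unfolding brace_star_set_def
  proof (rule brace_idealI)
    show "generate A ?S \<lhd> A"
    proof (rule A.normal_generateI'[OF S])
      fix h x assume "h \<in> ?S" and x: "x \<in> carrier A"
      then obtain a c where ac: "a \<in> carrier A" "c \<in> carrier A" "h = bstar A M a c" by blast
      have "inv\<^bsub>A\<^esub> bstar A M a x \<otimes>\<^bsub>A\<^esub> bstar A M a (x \<otimes>\<^bsub>A\<^esub> c) \<in> generate A ?S"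
        using ac x by (intro generate.eng generate.inv generate.incl) blast+
      then show "x \<otimes>\<^bsub>A\<^esub> h \<otimes>\<^bsub>A\<^esub> inv\<^bsub>A\<^esub> x \<in> generate A ?S"
        using star_conj[OF ac(1) x ac(2)] ac(3) by simp
    qed
    fix a h assume a: "a \<in> carrier A" and h: "h \<in> generate A ?S"
    have "bstar A M a h \<otimes>\<^bsub>A\<^esub> h \<in> generate A ?S"
      using a gen_carrier[OF h] by (intro generate.eng[OF generate.incl h]) auto
    then show "blam A M a h \<in> generate A ?S" using lam_eq_star[OF a gen_carrier[OF h]] by simp
  next
    fix h b assume "h \<in> generate A ?S" "b \<in> carrier A"
    then have "bstar A M h b \<in> ?S" using gen_carrier by blast
    then show "bstar A M h b \<in> generate A ?S" by (rule generate.incl)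
  qed
qed

lemma star_vanishes_on_minimal_ideal:
  assumes V: "V \<subseteq> carrier A"
    and minimal: "\<forall>I. brace_ideal A M I \<and> I \<noteq> {\<one>\<^bsub>A\<^esub>} \<longrightarrow> V \<subseteq> I"
    and B3: "brace_star_set A M (brace_star_set A M (carrier A) (carrier A)) (carrier A) = {\<one>\<^bsub>A\<^esub>}"
    and v: "v \<in> V" and b: "b \<in> carrier A"
  shows "bstar A M v b = \<one>\<^bsub>A\<^esub>"
proof (cases "brace_star_set A M (carrier A) (carrier A) = {\<one>\<^bsub>A\<^esub>}")
  case True
  have "bstar A M v b \<in> brace_star_set A M (carrier A) (carrier A)"
    unfolding brace_star_set_def using v b V by (blast intro: generate.incl)
  then show ?thesis using True by simp
next
  case False
  then have "v \<in> brace_star_set A M (carrier A) (carrier A)"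
    using minimal brace_ideal_star_set v by blast
  then have "bstar A M v b \<in> brace_star_set A M (brace_star_set A M (carrier A) (carrier A)) (carrier A)"
    unfolding brace_star_set_def[of A M _ "carrier A"] using b by (blast intro: generate.incl)
  then show ?thesis using B3 by simp
qed

lemma characteristic_subgroup_imp_ideal:
  assumes fin: "finite (carrier A)" and V: "brace_ideal A M V"
    and star: "\<And>v b. v \<in> V \<Longrightarrow> b \<in> carrier A \<Longrightarrow> bstar A M v b = \<one>\<^bsub>A\<^esub>"
    and H: "characteristic_subgroup H (A\<lparr>carrier := V\<rparr>)"
  shows "brace_ideal A M H"
proof -
  have VA: "V \<lhd> A" and Vlam: "\<And>a. a \<in> carrier A \<Longrightarrow> blam A M a ` V \<subseteq> V"
    using V by (auto simp: brace_ideal_def)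
  have subV: "subgroup V A" using VA by (simp add: normal_def)
  have finV: "finite V" using fin subgroup.subset[OF subV] by (rule finite_subset[rotated])
  have subH: "subgroup H A" using A.incl_subgroup[OF subV] H by (simp add: characteristic_subgroup_def)
  have HV: "H \<subseteq> V" using H subgroup.subset by (force simp: characteristic_subgroup_def)
  have invariant: "f ` H = H" if "f \<in> hom A A" "inj_on f V" "f ` V \<subseteq> V" for f
    using H A.hom_restrict_iso[OF subV finV that] by (simp add: characteristic_subgroup_def)
  show ?thesis
  proof (rule brace_idealI)
    have "x \<otimes>\<^bsub>A\<^esub> h \<otimes>\<^bsub>A\<^esub> inv\<^bsub>A\<^esub> x \<in> H" if x: "x \<in> carrier A" and h: "h \<in> H" for x h
    proof -
      have "(\<lambda>v. x \<otimes>\<^bsub>A\<^esub> v \<otimes>\<^bsub>A\<^esub> inv\<^bsub>A\<^esub> x) ` V \<subseteq> V" using VA x by (auto simp: A.normal_inv_iff)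
      moreover have "inj_on (\<lambda>v. x \<otimes>\<^bsub>A\<^esub> v \<otimes>\<^bsub>A\<^esub> inv\<^bsub>A\<^esub> x) V"
        using x subgroup.mem_carrier[OF subV] by (auto intro!: inj_onI)
      ultimately show ?thesis using invariant[OF A.conjugation_hom[OF x]] h by blast
    qed
    then show "H \<lhd> A" using subH by (simp add: A.normal_inv_iff)
  next
    fix a h assume a: "a \<in> carrier A" and h: "h \<in> H"
    have "inj_on (blam A M a) V" using lam_inj[OF a] subgroup.subset[OF subV] by (rule inj_on_subset)
    then show "blam A M a h \<in> H" using invariant[OF lam_hom[OF a] _ Vlam[OF a]] h by blast
  next
    fix h b assume "h \<in> H" "b \<in> carrier A"
    then show "bstar A M h b \<in> H" using star HV subgroup.one_closed[OF subH] by auto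
  qed
qed

lemma minimal_ideal_char_simple:
  assumes fin: "finite (carrier A)" and V: "brace_ideal A M V" and nontrivial: "V \<noteq> {\<one>\<^bsub>A\<^esub>}"
    and minimal: "\<forall>I. brace_ideal A M I \<and> I \<noteq> {\<one>\<^bsub>A\<^esub>} \<longrightarrow> V \<subseteq> I"
    and B3: "brace_star_set A M (brace_star_set A M (carrier A) (carrier A)) (carrier A) = {\<one>\<^bsub>A\<^esub>}"
  shows "char_simple (A\<lparr>carrier := V\<rparr>)"
proof (rule char_simpleI)
  show "carrier (A\<lparr>carrier := V\<rparr>) \<noteq> {\<one>\<^bsub>A\<lparr>carrier := V\<rparr>\<^esub>}" using nontrivial by simp
  have "V \<subseteq> carrier A" using V by (simp add: brace_ideal_def normal_def subgroup.subset)
  fix H assume H: "characteristic_subgroup H (A\<lparr>carrier := V\<rparr>)"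
    and "H \<noteq> {\<one>\<^bsub>A\<lparr>carrier := V\<rparr>\<^esub>}"
  moreover have "brace_ideal A M H"
    using characteristic_subgroup_imp_ideal[OF fin V _ H]
      star_vanishes_on_minimal_ideal[OF \<open>V \<subseteq> carrier A\<close> minimal B3] by blast
  ultimately show "carrier (A\<lparr>carrier := V\<rparr>) \<subseteq> H" using minimal by simp
qed

end

theorem lemma5p3:
  fixes A M :: "'a monoid" and Y :: "'a set"
  defines "V \<equiv> brace_ideal_gen A M {z. \<exists>x\<in>Y. \<exists>y\<in>Y. z = x \<otimes>\<^bsub>A\<^esub> inv\<^bsub>A\<^esub> y}"
  assumes brace: "skew_left_brace A M"
    and fin: "finite (carrier A)"
    and XB: "Y \<subseteq> carrier A"
    and X3: "card Y \<ge> 3"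
    and lamX: "\<forall>a\<in>carrier A. blam A M a ` Y = Y"
    and sigX: "\<forall>a\<in>carrier A. bsig A a ` Y = Y"
    and gen: "generate A Y = carrier A"
    and Vmin: "\<forall>I. brace_ideal A M I \<and> I \<noteq> {\<one>\<^bsub>A\<^esub>} \<longrightarrow> V \<subseteq> I"
    and Vquot: "brace_quotient_trivial A M V"
    and Vcyc: "cyclic_group (A Mod V)"
    and trans: "\<forall>x\<in>Y. \<forall>y\<in>Y. \<exists>a\<in>V. \<exists>b\<in>V. bsig A a (blam A M b x) = y"
    and B3: "brace_star_set A M (brace_star_set A M (carrier A) (carrier A)) (carrier A) = {\<one>\<^bsub>A\<^esub>}"
  shows "char_simple (A\<lparr>carrier := V\<rparr>)
    \<and> (comm_group (A\<lparr>carrier := V\<rparr>) \<longrightarrow>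
         (\<exists>p (n::nat). Factorial_Ring.prime (p::nat) \<and> A\<lparr>carrier := V\<rparr> \<cong> product_group {..<n} (\<lambda>_. integer_mod_group p)))
    \<and> (\<not> comm_group (A\<lparr>carrier := V\<rparr>) \<longrightarrow> group_center (A\<lparr>carrier := V\<rparr>) = {\<one>\<^bsub>A\<^esub>})"
proof -
  interpret skew_brace A M by (rule skew_brace.intro[OF brace])
  let ?D = "{z. \<exists>x\<in>Y. \<exists>y\<in>Y. z = x \<otimes>\<^bsub>A\<^esub> inv\<^bsub>A\<^esub> y}"
  have V: "brace_ideal A M V" and DV: "?D \<subseteq> V"
    using brace_ideal_gen[of ?D] XB unfolding V_def by auto
  have subV: "subgroup V A" using V by (simp add: brace_ideal_def normal_def)
  obtain x y where "x \<in> Y" "y \<in> Y" "x \<otimes>\<^bsub>A\<^esub> inv\<^bsub>A\<^esub> y \<noteq> \<one>\<^bsub>A\<^esub>"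
    using A.two_elements_quotient_ne_one[OF XB finite_subset[OF XB fin]] X3 by auto
  then have "V \<noteq> {\<one>\<^bsub>A\<^esub>}" using DV by blast
  then have "char_simple (A\<lparr>carrier := V\<rparr>)" by (rule minimal_ideal_char_simple[OF fin V _ Vmin B3])
  moreover have "finite (carrier (A\<lparr>carrier := V\<rparr>))"
    using fin subgroup.subset[OF subV] finite_subset by simp
  ultimately show ?thesis
    using group.finite_char_simple_structure[OF A.subgroup_imp_group[OF subV]] by simp
qed

end
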